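(* For every $\delta\in\mathbb N$, there exist $\varepsilon > 0$ and a blowup $H$ of a 7-cycle with minimum degree at least $\delta$ such that $\sum_{v\in V(H)}1/(d(v) + \varepsilon) > 3$.
   Context: A blowup of a graph $F$ is a graph obtained from $F$ by replacing some vertices with cliques and replacing each edge by the complete bipartite graph between the corresponding vertex sets (i.e., vertices $x$ of $F$ are replaced by pairwise disjoint nonempty cliques $Q_x$, and for each edge $xy$ of $F$ every vertex of $Q_x$ is adjacent to every vertex of $Q_y$, with no other edges). $d(v)$ is the degree of $v$ in $H$. *)

theory Defs
  imports Complex_Main
begin

definition simple_graph :: "'a set \<Rightarrow> ('a \<Rightarrow> 'a \<Rightarrow> bool) \<Rightarrow> bool" where
  "simple_graph V E \<longleftrightarrow> finite V \<and> (\<forall>u v. E u v \<longrightarrow> u \<in> V \<and> v \<in> V \<and> u \<noteq> v \<and> E v u)"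

definition degree :: "'a set \<Rightarrow> ('a \<Rightarrow> 'a \<Rightarrow> bool) \<Rightarrow> 'a \<Rightarrow> nat" where
  "degree V E v = card {u \<in> V. E v u}"

definition is_blowup :: "'b set \<Rightarrow> ('b \<Rightarrow> 'b \<Rightarrow> bool) \<Rightarrow> 'a set \<Rightarrow> ('a \<Rightarrow> 'a \<Rightarrow> bool) \<Rightarrow> bool" where
  "is_blowup VF EF VH EH \<longleftrightarrow> simple_graph VH EH \<and>
     (\<exists>q. q ` VH = VF \<and>
        (\<forall>u\<in>VH. \<forall>v\<in>VH. u \<noteq> v \<longrightarrow> (EH u v \<longleftrightarrow> (q u = q v \<or> EF (q u) (q v)))))"

definition C7_V :: "nat set" where "C7_V = {0..<7}"
definition C7_E :: "nat \<Rightarrow> nat \<Rightarrow> bool" where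
  "C7_E i j \<longleftrightarrow> i < 7 \<and> j < 7 \<and> ((i + 1) mod 7 = j \<or> (j + 1) mod 7 = i)"

end

theory Submission
  imports Defs "HOL-Library.Nat_Bijection"
begin

(* Blow up the vertices 0, 2, 4 of the 7-cycle into cliques of size N and keep 1, 3, 5, 6 as
   single vertices.  The vertices 1 and 3 then have degree 2N and all others degree N + 1, so
   the sum of 1/d(v) is (3N + 2)/(N + 1) + 1/N = 3 + 1/N - 1/(N + 1) > 3.  The sum depends
   continuously on a shift of all degrees by \<epsilon>, so the strict inequality survives a small
   \<epsilon> > 0. *)

definition blowup_vertices :: "nat set \<Rightarrow> (nat \<Rightarrow> nat) \<Rightarrow> nat set" where
  "blowup_vertices VF s = prod_encode ` (SIGMA x:VF. {..<s x})"

definition blowup_class :: "nat \<Rightarrow> nat" where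
  "blowup_class v = fst (prod_decode v)"

definition blowup_edges :: "nat set \<Rightarrow> (nat \<Rightarrow> nat \<Rightarrow> bool) \<Rightarrow> (nat \<Rightarrow> nat) \<Rightarrow> nat \<Rightarrow> nat \<Rightarrow> bool" where
  "blowup_edges VF EF s u v \<longleftrightarrow> u \<in> blowup_vertices VF s \<and> v \<in> blowup_vertices VF s \<and> u \<noteq> v \<and>
     (blowup_class u = blowup_class v \<or> EF (blowup_class u) (blowup_class v))"

lemma blowup_class_prod_encode [simp]: "blowup_class (prod_encode (x, i)) = x"
  by (simp add: blowup_class_def)

lemma finite_blowup_vertices: "finite VF \<Longrightarrow> finite (blowup_vertices VF s)"
  by (simp add: blowup_vertices_def)

lemma blowup_class_in: "v \<in> blowup_vertices VF s \<Longrightarrow> blowup_class v \<in> VF"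
  by (auto simp: blowup_vertices_def)

lemma blowup_fibre_eq:
  assumes "x \<in> VF"
  shows "{v \<in> blowup_vertices VF s. blowup_class v = x} = prod_encode ` ({x} \<times> {..<s x})"
  using assms by (auto simp: blowup_vertices_def)

lemma card_blowup_fibre:
  assumes "x \<in> VF"
  shows "card {v \<in> blowup_vertices VF s. blowup_class v = x} = s x"
  unfolding blowup_fibre_eq[OF assms] by (simp add: card_image inj_prod_encode card_cartesian_product)

lemma is_blowup_blowup:
  assumes F: "simple_graph VF EF" and pos: "\<forall>x\<in>VF. s x > 0"
  shows "is_blowup VF EF (blowup_vertices VF s) (blowup_edges VF EF s)"
proof -
  have "finite VF" using F by (simp add: simple_graph_def)
  then have "simple_graph (blowup_vertices VF s) (blowup_edges VF EF s)"
    using F by (auto simp: simple_graph_def blowup_edges_def finite_blowup_vertices)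
  moreover have "blowup_class ` blowup_vertices VF s = VF"
  proof (intro equalityI subsetI)
    fix x assume "x \<in> VF"
    then have "prod_encode (x, 0) \<in> blowup_vertices VF s"
      using pos by (auto simp: blowup_vertices_def)
    then show "x \<in> blowup_class ` blowup_vertices VF s"
      by (metis blowup_class_prod_encode image_eqI)
  qed (auto intro: blowup_class_in)
  ultimately show ?thesis
    unfolding is_blowup_def by (auto simp: blowup_edges_def)
qed

lemma degree_blowup:
  assumes F: "simple_graph VF EF" and v: "v \<in> blowup_vertices VF s"
  shows "degree (blowup_vertices VF s) (blowup_edges VF EF s) v =
    s (blowup_class v) - 1 + (\<Sum>y\<in>{y \<in> VF. EF (blowup_class v) y}. s y)"
proof -
  let ?V = "blowup_vertices VF s" and ?x = "blowup_class v"
  let ?fibre = "\<lambda>y. {u \<in> ?V. blowup_class u = y}"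
  let ?N = "{y \<in> VF. EF ?x y}"
  have fin: "finite VF" using F by (simp add: simple_graph_def)
  have x: "?x \<in> VF" using v by (rule blowup_class_in)
  have irrefl: "\<not> EF y y" for y using F by (auto simp: simple_graph_def)
  have nbhd: "{u \<in> ?V. blowup_edges VF EF s v u} = (?fibre ?x - {v}) \<union> (\<Union>y\<in>?N. ?fibre y)"
    using v irrefl blowup_class_in by (auto simp: blowup_edges_def)
  have "card (?fibre ?x - {v}) = s ?x - 1"
    using v x by (simp add: card_blowup_fibre)
  moreover have "card (\<Union>y\<in>?N. ?fibre y) = (\<Sum>y\<in>?N. s y)"
    using fin by (subst card_UN_disjoint) (auto simp: card_blowup_fibre finite_blowup_vertices)
  moreover have "(?fibre ?x - {v}) \<inter> (\<Union>y\<in>?N. ?fibre y) = {}"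
    using irrefl by auto
  ultimately show ?thesis
    unfolding degree_def nbhd using fin by (simp add: card_Un_disjoint finite_blowup_vertices)
qed

lemma sum_blowup_vertices:
  assumes "finite VF"
  shows "(\<Sum>v\<in>blowup_vertices VF s. g (blowup_class v)) = (\<Sum>x\<in>VF. of_nat (s x) * g x)"
proof -
  have "(\<Sum>v\<in>blowup_vertices VF s. g (blowup_class v)) = (\<Sum>(x, i)\<in>(SIGMA x:VF. {..<s x}). g x)"
    unfolding blowup_vertices_def
    by (subst sum.reindex) (auto simp: inj_prod_encode intro!: sum.cong)
  also have "\<dots> = (\<Sum>x\<in>VF. of_nat (s x) * g x)"
    using assms by (subst sum.Sigma[symmetric]) auto
  finally show ?thesis .
qed

lemma sum_inverse_shift_gt:
  fixes d :: "'a \<Rightarrow> real"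
  assumes "finite A" "\<forall>a\<in>A. d a \<noteq> 0" "c < (\<Sum>a\<in>A. 1 / d a)"
  shows "\<exists>\<epsilon>>0. c < (\<Sum>a\<in>A. 1 / (d a + \<epsilon>))"
proof -
  have "((\<lambda>\<epsilon>. \<Sum>a\<in>A. 1 / (d a + \<epsilon>)) \<longlongrightarrow> (\<Sum>a\<in>A. 1 / (d a + 0))) (at_right 0)"
    using assms(2) by (intro tendsto_intros) auto
  then have "\<forall>\<^sub>F \<epsilon> in at_right 0. c < (\<Sum>a\<in>A. 1 / (d a + \<epsilon>))"
    using assms(3) by (intro order_tendstoD(1)) auto
  then have "\<forall>\<^sub>F \<epsilon> in at_right 0. 0 < \<epsilon> \<and> c < (\<Sum>a\<in>A. 1 / (d a + \<epsilon>))"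
    using eventually_at_right_less by (rule eventually_conj[rotated])
  then show ?thesis
    by (auto dest: eventually_happens'[OF trivial_limit_at_right_real])
qed

lemma simple_graph_C7: "simple_graph C7_V C7_E"
  unfolding simple_graph_def C7_V_def C7_E_def by (auto simp: mod_Suc split: if_splits)

lemma C7_neighbours:
  assumes "x \<in> C7_V"
  shows "{y \<in> C7_V. C7_E x y} = {(x + 1) mod 7, (x + 6) mod 7}"
proof -
  have "x = 0 \<or> x = 1 \<or> x = 2 \<or> x = 3 \<or> x = 4 \<or> x = 5 \<or> x = 6"
    using assms by (auto simp: C7_V_def)
  then show ?thesis
    by (elim disjE) (auto simp: C7_V_def C7_E_def mod_Suc split: if_splits)
qed

definition c7_weight :: "nat \<Rightarrow> nat \<Rightarrow> nat" where
  "c7_weight N x = (if x \<in> {0, 2, 4} then N else 1)"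

definition c7_degree :: "nat \<Rightarrow> nat \<Rightarrow> nat" where
  "c7_degree N x = (if x \<in> {1, 3} then 2 * N else N + 1)"

lemma c7_class_degree:
  assumes "N \<ge> 1" "x \<in> C7_V"
  shows "c7_weight N x - 1 + (\<Sum>y\<in>{y \<in> C7_V. C7_E x y}. c7_weight N y) = c7_degree N x"
proof -
  have "x = 0 \<or> x = 1 \<or> x = 2 \<or> x = 3 \<or> x = 4 \<or> x = 5 \<or> x = 6"
    using assms(2) by (auto simp: C7_V_def)
  then show ?thesis
    using assms by (elim disjE) (simp_all add: C7_neighbours c7_weight_def c7_degree_def)
qed

abbreviation c7_blowup_vertices :: "nat \<Rightarrow> nat set" where
  "c7_blowup_vertices N \<equiv> blowup_vertices C7_V (c7_weight N)"

abbreviation c7_blowup_edges :: "nat \<Rightarrow> nat \<Rightarrow> nat \<Rightarrow> bool" where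
  "c7_blowup_edges N \<equiv> blowup_edges C7_V C7_E (c7_weight N)"

lemma degree_c7_blowup:
  assumes "N \<ge> 1" "v \<in> c7_blowup_vertices N"
  shows "degree (c7_blowup_vertices N) (c7_blowup_edges N) v = c7_degree N (blowup_class v)"
  using degree_blowup[OF simple_graph_C7 assms(2)] c7_class_degree[OF assms(1) blowup_class_in[OF assms(2)]]
  by simp

lemma c7_weighted_inverse_degree_sum_gt_3:
  assumes "N \<ge> 1"
  shows "3 < (\<Sum>x\<in>C7_V. real (c7_weight N x) / real (c7_degree N x))"
proof -
  define n where "n = real N"
  have n: "n \<ge> 1" using assms by (simp add: n_def)
  have "(\<Sum>x\<in>C7_V. real (c7_weight N x) / real (c7_degree N x)) = 3 * n / (n + 1) + 2 / (n + 1) + 1 / n"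
    using n by (simp add: C7_V_def c7_weight_def c7_degree_def eval_nat_numeral n_def add.commute)
  also have "\<dots> = 3 - 1 / (n + 1) + 1 / n"
    using n by (simp add: add_divide_distrib[symmetric]) (simp add: field_simps)
  also have "\<dots> > 3"
    using n by (simp add: frac_less2)
  finally show ?thesis .
qed

lemma c7_blowup_inverse_degree_sum_gt_3:
  assumes N: "N \<ge> 1"
  shows "3 < (\<Sum>v\<in>c7_blowup_vertices N. 1 / real (degree (c7_blowup_vertices N) (c7_blowup_edges N) v))"
proof -
  have fin: "finite C7_V" by (simp add: C7_V_def)
  have "(\<Sum>x\<in>C7_V. real (c7_weight N x) / real (c7_degree N x))
      = (\<Sum>x\<in>C7_V. real (c7_weight N x) * (1 / real (c7_degree N x)))"
    by simp
  also have "\<dots> = (\<Sum>v\<in>c7_blowup_vertices N. 1 / real (c7_degree N (blowup_class v)))"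
    by (rule sum_blowup_vertices[OF fin, symmetric])
  also have "\<dots> = (\<Sum>v\<in>c7_blowup_vertices N. 1 / real (degree (c7_blowup_vertices N) (c7_blowup_edges N) v))"
    using degree_c7_blowup[OF N] by simp
  finally show ?thesis
    using c7_weighted_inverse_degree_sum_gt_3[OF N] by simp
qed

theorem proposition4p3:
  fixes \<delta> :: nat
  shows "\<exists>\<epsilon>::real. \<epsilon> > 0 \<and>
    (\<exists>(V::nat set) E. is_blowup C7_V C7_E V E \<and>
       (\<forall>v\<in>V. degree V E v \<ge> \<delta>) \<and>
       (\<Sum>v\<in>V. 1 / (real (degree V E v) + \<epsilon>)) > 3)"
proof -
  define N where "N = \<delta> + 1"
  define V where "V = c7_blowup_vertices N"
  define E where "E = c7_blowup_edges N"
  have N: "N \<ge> 1" by (simp add: N_def)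
  have deg: "degree V E v = c7_degree N (blowup_class v)" if "v \<in> V" for v
    using degree_c7_blowup[OF N] that by (simp add: V_def E_def)
  have "finite V"
    by (simp add: V_def finite_blowup_vertices C7_V_def)
  moreover have "\<forall>v\<in>V. real (degree V E v) \<noteq> 0"
    using deg by (simp add: c7_degree_def N_def)
  ultimately obtain \<epsilon> :: real where "\<epsilon> > 0" "3 < (\<Sum>v\<in>V. 1 / (real (degree V E v) + \<epsilon>))"
    using sum_inverse_shift_gt[OF _ _ c7_blowup_inverse_degree_sum_gt_3[OF N, folded V_def E_def]] by blast
  moreover have "is_blowup C7_V C7_E V E"
    unfolding V_def E_def using N by (intro is_blowup_blowup[OF simple_graph_C7]) (simp add: c7_weight_def)
  moreover have "\<forall>v\<in>V. degree V E v \<ge> \<delta>"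
    using deg by (simp add: c7_degree_def N_def)
  ultimately show ?thesis
    by blast
qed

end
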